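(* Let $G$ be a finite group of order greater than $1$ and let $q$ be the smallest prime divisor of $|G|$. If $\mathcal{F}_{pp}(G)=\{1,f\}$ for some integer $f>1$, then $f\geq q$.
   Context: All groups are finite. For a group $G$ and a positive integer $n$ dividing $|G|$, let $F_n(G)=\{g\in G\mid g^n=1\}$. By Frobenius' theorem $|F_n(G)|=f_n\cdot n$ for a positive integer $f_n$, called the Frobenius quotient of $G$ for $n$. ${\rm exp}(G)$ denotes the exponent of $G$. A prime-power divisor of ${\rm exp}(G)$ is a positive divisor $n$ of ${\rm exp}(G)$ of the form $n=p^k$ with $p$ prime and $k\geq 0$ (so $n=1$ is included). $\mathcal{F}_{pp}(G)=\{f_n\mid n \text{ is a prime-power divisor of } {\rm exp}(G)\}$. *)

theory Defs
  imports "HOL-Algebra.Algebra" "HOL-Computational_Algebra.Primes"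
begin

definition group_exp :: "('a, 'b) monoid_scheme \<Rightarrow> nat" where
  "group_exp G = Lcm (group.ord G ` carrier G)"

definition frob_set :: "('a, 'b) monoid_scheme \<Rightarrow> nat \<Rightarrow> 'a set" where
  "frob_set G n = {g \<in> carrier G. g [^]\<^bsub>G\<^esub> n = \<one>\<^bsub>G\<^esub>}"

text \<open>Frobenius quotient f_n = |F_n(G)| / n (an integer by Frobenius' theorem when n divides |G|).\<close>
definition frob_quot :: "('a, 'b) monoid_scheme \<Rightarrow> nat \<Rightarrow> nat" where
  "frob_quot G n = card (frob_set G n) div n"

text \<open>Prime-power divisors of exp(G), including 1 = p^0.\<close>
definition pp_divisors_exp :: "('a, 'b) monoid_scheme \<Rightarrow> nat set" where
  "pp_divisors_exp G = {n. n dvd group_exp G \<and> (\<exists>p k. Factorial_Ring.prime (p::nat) \<and> n = p ^ k)}"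

definition F_pp :: "('a, 'b) monoid_scheme \<Rightarrow> nat set" where
  "F_pp G = frob_quot G ` pp_divisors_exp G"

end

(* Only membership of f in F_pp(G) is needed: every Frobenius quotient f at a prime power p^k
   satisfies f = 1 (mod p - 1), so f > 1 forces f >= p >= q.

   The congruence comes from |F(p^(k+1))| = |F(p^k)| + #{x. ord x = p^(k+1)}. The elements of
   order p^(k+1) fall into sets of generators of cyclic subgroups, so their number is a multiple
   of phi(p^(k+1)) = p^k (p - 1); dividing by p^k (Frobenius) gives
   p f(p^(k+1)) = f(p^k) + (p - 1) c.

   Frobenius' theorem for p^k is obtained by descending with the same identity from the full
   p-part p^s of |G|, where it says that p^s divides the number of p-elements. For that, write
   every g uniquely as a commuting product of a p-element and a p'-element: |G| is the sum, over
   the p'-elements z, of the number of p-elements centralising z. The central z contribute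
   (number of central p'-elements) * (number of p-elements), and that first factor is prime to p
   by Cauchy's theorem; a non-central z lies in a conjugacy class of size |G : C(z)|, and by
   induction |C(z)|_p divides the number of p-elements of C(z). *)

theory Submission
  imports Defs "HOL-Number_Theory.Cong" "HOL-Number_Theory.Totient"
begin

context group
begin

lemma pow_cong:
  fixes n i j :: nat
  assumes "x \<in> carrier G" "x [^] n = \<one>" "[i = j] (mod n)"
  shows "x [^] i = x [^] j"
proof -
  have "x [^] k = x [^] (k mod n)" for k :: nat
  proof -
    have "x [^] k = (x [^] n) [^] (k div n) \<otimes> x [^] (k mod n)"
      using assms(1) by (simp add: nat_pow_pow nat_pow_mult)
    then show ?thesis
      using assms(1,2) by simp
  qed
  then show ?thesis
    using assms(3) unfolding cong_def by metis
qed

section \<open>Counting elements of a given order\<close>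

definition cyclic_generators :: "'a \<Rightarrow> 'a set" where
  "cyclic_generators x = (\<lambda>k. x [^] k) ` totatives (ord x)"

lemma card_cyclic_generators:
  assumes "x \<in> carrier G"
  shows "card (cyclic_generators x) = totient (ord x)"
proof -
  have "inj_on (\<lambda>k. x [^] k) (totatives (ord x))"
    using ord_inj'[OF assms] by (rule inj_on_subset) (auto simp: in_totatives_iff)
  then show ?thesis
    unfolding cyclic_generators_def totient_def by (rule card_image)
qed

lemma mem_cyclic_generators_iff:
  assumes "finite (carrier G)" "x \<in> carrier G"
  shows "y \<in> cyclic_generators x \<longleftrightarrow> y \<in> carrier G \<and> ord y = ord x \<and> (\<exists>k::nat. y = x [^] k)"
proof
  assume "y \<in> cyclic_generators x"
  then show "y \<in> carrier G \<and> ord y = ord x \<and> (\<exists>k::nat. y = x [^] k)"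
    using assms pow_ord_eq_ord_iff by (auto simp: cyclic_generators_def in_totatives_iff)
next
  assume "y \<in> carrier G \<and> ord y = ord x \<and> (\<exists>k::nat. y = x [^] k)"
  then obtain k :: nat where y: "y = x [^] k" "ord (x [^] k) = ord x" by blast
  define d where "d = ord x"
  have "d \<ge> 1"
    using ord_ge_1 assms unfolding d_def by blast
  have coprime: "coprime (k mod d) d"
    using y(2) assms pow_ord_eq_ord_iff \<open>d \<ge> 1\<close> unfolding d_def by simp
  have x_pow_d: "x [^] d = \<one>"
    using assms(2) unfolding d_def by simp
  show "y \<in> cyclic_generators x"
  proof (cases "k mod d = 0")
    case True
    then have "[k = 1] (mod d)"
      using coprime by (simp add: cong_def)
    then have "y = x [^] (1::nat)"
      unfolding y(1) by (rule pow_cong[OF assms(2) x_pow_d])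
    moreover have "1 \<in> totatives d"
      using \<open>d \<ge> 1\<close> by (simp add: in_totatives_iff)
    ultimately show ?thesis
      unfolding cyclic_generators_def d_def by blast
  next
    case False
    then have "k mod d \<in> totatives d"
      using coprime \<open>d \<ge> 1\<close> by (simp add: in_totatives_iff)
    moreover have "y = x [^] (k mod d)"
      unfolding y(1) by (rule pow_cong[OF assms(2) x_pow_d]) (simp add: cong_def)
    ultimately show ?thesis
      unfolding cyclic_generators_def d_def by blast
  qed
qed

lemma cyclic_generators_eq:
  assumes "finite (carrier G)" "x \<in> carrier G" "y \<in> cyclic_generators x"
  shows "cyclic_generators y = cyclic_generators x"
proof -
  obtain k :: nat where y: "y \<in> carrier G" "ord y = ord x" "y = x [^] k"
    using assms mem_cyclic_generators_iff by blast
  have "cyclic_generators y \<subseteq> cyclic_generators x"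
  proof
    fix w
    assume "w \<in> cyclic_generators y"
    then obtain l :: nat where w: "w \<in> carrier G" "ord w = ord x" "w = y [^] l"
      using assms(1) y mem_cyclic_generators_iff by auto
    then have "w = x [^] (k * l)"
      using assms(2) y(3) by (simp add: nat_pow_pow)
    then show "w \<in> cyclic_generators x"
      using assms(1,2) w mem_cyclic_generators_iff by blast
  qed
  moreover have "card (cyclic_generators y) = card (cyclic_generators x)"
    using assms(2) y by (simp add: card_cyclic_generators)
  ultimately show ?thesis
    by (simp add: card_subset_eq cyclic_generators_def)
qed

lemma totient_dvd_card_elements_of_ord:
  assumes "finite (carrier G)"
  shows "totient d dvd card {x \<in> carrier G. ord x = d}"
proof -
  let ?E = "{x \<in> carrier G. ord x = d}"
  let ?C = "cyclic_generators ` ?E"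
  have union: "\<Union>?C = ?E"
  proof
    show "\<Union>?C \<subseteq> ?E"
      using assms by (auto simp: mem_cyclic_generators_iff)
    show "?E \<subseteq> \<Union>?C"
    proof
      fix x
      assume x: "x \<in> ?E"
      then have "x \<in> cyclic_generators x"
        using assms mem_cyclic_generators_iff[of x x] by (auto intro: exI[of _ 1])
      then show "x \<in> \<Union>?C"
        using x by blast
    qed
  qed
  have "totient d * card ?C = card (\<Union>?C)"
  proof (rule card_partition)
    show "finite ?C" "finite (\<Union>?C)"
      using assms union by simp_all
    show "card c = totient d" if "c \<in> ?C" for c
      using that card_cyclic_generators by auto
    show "c1 \<inter> c2 = {}" if c: "c1 \<in> ?C" "c2 \<in> ?C" "c1 \<noteq> c2" for c1 c2
    proof -
      obtain x1 x2 where x: "x1 \<in> ?E" "x2 \<in> ?E" "c1 = cyclic_generators x1" "c2 = cyclic_generators x2"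
        using c(1,2) by blast
      have "cyclic_generators x1 = cyclic_generators y" "cyclic_generators x2 = cyclic_generators y"
        if "y \<in> c1" "y \<in> c2" for y
        using that x assms cyclic_generators_eq by auto
      then show ?thesis
        using c(3) x(3,4) by blast
    qed
  qed
  then show ?thesis
    using union by (metis dvd_triv_left)
qed

lemma card_frob_set_prime_power_Suc:
  assumes "finite (carrier G)" "Factorial_Ring.prime p"
  shows "card (frob_set G (p ^ Suc n))
       = card (frob_set G (p ^ n)) + card {x \<in> carrier G. ord x = p ^ Suc n}"
proof -
  have dvd_Suc_iff: "d dvd p ^ Suc n \<longleftrightarrow> d dvd p ^ n \<or> d = p ^ Suc n" for d
  proof
    assume "d dvd p ^ Suc n"
    then obtain i where "i \<le> Suc n" "d = p ^ i"
      using divides_primepow_nat[OF assms(2)] by blast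
    then show "d dvd p ^ n \<or> d = p ^ Suc n"
      by (auto simp: le_Suc_eq le_imp_power_dvd)
  next
    assume "d dvd p ^ n \<or> d = p ^ Suc n"
    then show "d dvd p ^ Suc n"
      by auto
  qed
  have not_dvd: "\<not> p ^ Suc n dvd p ^ n"
    using power_dvd_imp_le prime_gt_1_nat[OF assms(2)] by fastforce
  have "frob_set G (p ^ Suc n) = frob_set G (p ^ n) \<union> {x \<in> carrier G. ord x = p ^ Suc n}"
    using dvd_Suc_iff by (auto simp: frob_set_def pow_eq_id)
  moreover have "frob_set G (p ^ n) \<inter> {x \<in> carrier G. ord x = p ^ Suc n} = {}"
    using not_dvd by (auto simp: frob_set_def pow_eq_id)
  ultimately show ?thesis
    using assms(1) by (simp add: frob_set_def card_Un_disjoint)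
qed

section \<open>Conjugation and centralizers\<close>

definition centralizer :: "'a \<Rightarrow> 'a set" where
  "centralizer z = {g \<in> carrier G. g \<otimes> z = z \<otimes> g}"

definition conjugation :: "'a \<Rightarrow> 'a \<Rightarrow> 'a" where
  "conjugation g = (\<lambda>h \<in> carrier G. g \<otimes> h \<otimes> inv g)"

lemma conjugation_closed [simp]:
  "g \<in> carrier G \<Longrightarrow> h \<in> carrier G \<Longrightarrow> conjugation g h \<in> carrier G"
  by (simp add: conjugation_def)

lemma conjugation_mult:
  assumes "g \<in> carrier G" "a \<in> carrier G" "b \<in> carrier G"
  shows "conjugation g (a \<otimes> b) = conjugation g a \<otimes> conjugation g b"
  using assms by (simp add: conjugation_def m_assoc) (simp flip: m_assoc)

lemma conjugation_pow:
  assumes "g \<in> carrier G" "a \<in> carrier G"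
  shows "conjugation g (a [^] (n::nat)) = conjugation g a [^] n"
proof (induction n)
  case 0
  then show ?case
    using assms by (simp add: conjugation_def)
next
  case (Suc n)
  then show ?case
    using assms by (simp add: conjugation_mult)
qed

lemma conjugation_inv_conjugation [simp]:
  assumes "g \<in> carrier G" "a \<in> carrier G"
  shows "conjugation (inv g) (conjugation g a) = a"
  using assms by (simp add: conjugation_def m_assoc) (simp flip: m_assoc)

lemma conjugation_eq_iff_mem_centralizer:
  assumes "g \<in> carrier G" "z \<in> carrier G"
  shows "conjugation g z = z \<longleftrightarrow> g \<in> centralizer z"
  using assms by (simp add: conjugation_def centralizer_def inv_solve_right')

lemma conjugation_central:
  assumes "g \<in> carrier G" "z \<in> carrier G" "centralizer z = carrier G"
  shows "conjugation g z = z"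
  using assms conjugation_eq_iff_mem_centralizer by simp

lemma central_conjugation_iff:
  assumes "g \<in> carrier G" "z \<in> carrier G"
  shows "centralizer (conjugation g z) = carrier G \<longleftrightarrow> centralizer z = carrier G"
proof
  assume central: "centralizer (conjugation g z) = carrier G"
  then have "conjugation (inv g) (conjugation g z) = conjugation g z"
    using assms by (intro conjugation_central) auto
  then show "centralizer z = carrier G"
    using assms central by (metis conjugation_inv_conjugation)
next
  assume "centralizer z = carrier G"
  then show "centralizer (conjugation g z) = carrier G"
    using assms conjugation_central by simp
qed

lemma conjugation_action: "group_action G (carrier G) conjugation"
  unfolding conjugation_def by (rule action_by_conjugation)

lemma stabilizer_conjugation:
  "z \<in> carrier G \<Longrightarrow> stabilizer G conjugation z = centralizer z"
  using conjugation_eq_iff_mem_centralizer by (auto simp: stabilizer_def centralizer_def)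

lemma subgroup_centralizer: "z \<in> carrier G \<Longrightarrow> subgroup (centralizer z) G"
  using group_action.stabilizer_subgroup[OF conjugation_action] stabilizer_conjugation by metis

lemma card_conjugacy_class_mult_card_centralizer:
  "z \<in> carrier G \<Longrightarrow> card (orbit G conjugation z) * card (centralizer z) = order G"
  using group_action.orbit_stabilizer_theorem[OF conjugation_action] stabilizer_conjugation by metis

lemma conjugation_frob_set:
  assumes "g \<in> carrier G" "x \<in> frob_set G n"
  shows "conjugation g x \<in> frob_set G n"
  using assms conjugation_pow[of g x n] by (simp add: frob_set_def conjugation_def)

lemma conjugation_image_inter_centralizer:
  assumes "g \<in> carrier G" "z \<in> carrier G"
    and closed: "\<And>x. x \<in> A \<Longrightarrow> conjugation g x \<in> A" and "A \<subseteq> carrier G"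
  shows "conjugation g ` (A \<inter> centralizer z) \<subseteq> A \<inter> centralizer (conjugation g z)"
proof
  fix y
  assume "y \<in> conjugation g ` (A \<inter> centralizer z)"
  then obtain x where x: "x \<in> A" "x \<in> carrier G" "x \<otimes> z = z \<otimes> x" "y = conjugation g x"
    using assms(4) by (auto simp: centralizer_def)
  have "conjugation g x \<otimes> conjugation g z = conjugation g z \<otimes> conjugation g x"
    using assms(1,2) x by (simp flip: conjugation_mult)
  then show "y \<in> A \<inter> centralizer (conjugation g z)"
    using assms(1) x closed by (simp add: centralizer_def)
qed

lemma card_inter_centralizer_conjugation:
  assumes "finite (carrier G)" "g \<in> carrier G" "z \<in> carrier G" "A \<subseteq> carrier G"
    and closed: "\<And>g x. g \<in> carrier G \<Longrightarrow> x \<in> A \<Longrightarrow> conjugation g x \<in> A"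
  shows "card (A \<inter> centralizer (conjugation g z)) = card (A \<inter> centralizer z)"
proof -
  have le: "card (A \<inter> centralizer z) \<le> card (A \<inter> centralizer (conjugation g z))"
    if "g \<in> carrier G" "z \<in> carrier G" for g z
  proof (rule card_inj_on_le)
    show "inj_on (conjugation g) (A \<inter> centralizer z)"
    proof (rule inj_on_inverseI[where g = "conjugation (inv g)"])
      show "conjugation (inv g) (conjugation g x) = x" if "x \<in> A \<inter> centralizer z" for x
        using that \<open>g \<in> carrier G\<close> assms(4) by auto
    qed
    show "conjugation g ` (A \<inter> centralizer z) \<subseteq> A \<inter> centralizer (conjugation g z)"
      using that assms(4) closed by (intro conjugation_image_inter_centralizer)
    show "finite (A \<inter> centralizer (conjugation g z))"
      using assms(1,4) finite_subset by blast
  qed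
  have "card (A \<inter> centralizer (conjugation g z))
      \<le> card (A \<inter> centralizer (conjugation (inv g) (conjugation g z)))"
    using assms(2,3) by (intro le) auto
  then show ?thesis
    using le[OF assms(2,3)] unfolding conjugation_inv_conjugation[OF assms(2,3)] by linarith
qed

lemma dvd_sum_class_function:
  assumes "finite (carrier G)"
    and class_function: "\<And>g z. g \<in> carrier G \<Longrightarrow> z \<in> carrier G \<Longrightarrow> c (conjugation g z) = c z"
    and "\<And>z. z \<in> carrier G \<Longrightarrow> d dvd card (orbit G conjugation z) * c z"
  shows "d dvd (\<Sum>z \<in> carrier G. c z)"
proof -
  have "d dvd (\<Sum>x \<in> orb. c x)" if orb: "orb \<in> orbits G (carrier G) conjugation" for orb
  proof -
    obtain z where z: "z \<in> carrier G" "orb = orbit G conjugation z"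
      using orb unfolding orbits_def by blast
    have "(\<Sum>x \<in> orb. c x) = (\<Sum>x \<in> orb. c z)"
    proof (rule sum.cong[OF refl])
      fix x
      assume "x \<in> orb"
      then obtain g where "g \<in> carrier G" "x = conjugation g z"
        using z(2) unfolding orbit_def by blast
      then show "c x = c z"
        using class_function z(1) by simp
    qed
    then show ?thesis
      using assms(3)[OF z(1)] z(2) by simp
  qed
  then have "d dvd (\<Sum>orb \<in> orbits G (carrier G) conjugation. \<Sum>x \<in> orb. c x)"
    by (rule dvd_sum)
  then show ?thesis
    using group_action.disjoint_sum[OF conjugation_action assms(1), of c] by simp
qed

end

section \<open>Frobenius' theorem for prime powers\<close>

definition p_elements :: "('a, 'b) monoid_scheme \<Rightarrow> nat \<Rightarrow> 'a set" where
  "p_elements G p = {x \<in> carrier G. \<exists>k. x [^]\<^bsub>G\<^esub> (p ^ k) = \<one>\<^bsub>G\<^esub>}"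

context group
begin

lemma bij_betw_coprime_factorization:
  assumes "coprime a b" and exp: "\<And>g. g \<in> carrier G \<Longrightarrow> g [^] (a * b) = \<one>"
  shows "bij_betw (\<lambda>(z, x). x \<otimes> z)
           (SIGMA z : frob_set G b. frob_set G a \<inter> centralizer z) (carrier G)"
proof -
  \<comment> \<open>g^e and g^e' are the a-part and the b-part of g\<close>
  obtain e where e: "[e = 1] (mod a)" "[e = 0] (mod b)"
    using binary_chinese_remainder_nat[OF assms(1)] by blast
  obtain e' where e': "[e' = 0] (mod a)" "[e' = 1] (mod b)"
    using binary_chinese_remainder_nat[OF assms(1)] by blast
  have e_sum: "[e + e' = 1] (mod a * b)"
    using e e' assms(1) cong_add[of e 1 a e' 0] cong_add[of e 0 b e' 1]
    by (intro coprime_cong_mult_nat) simp_all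
  have root_a: "x [^] e = x" "x [^] e' = \<one>" if "x \<in> frob_set G a" for x
    using that pow_cong[of x a] e(1) e'(1) by (auto simp: frob_set_def)
  have root_b: "z [^] e = \<one>" "z [^] e' = z" if "z \<in> frob_set G b" for z
    using that pow_cong[of z b] e(2) e'(2) by (auto simp: frob_set_def)
  have split: "g [^] e \<otimes> g [^] e' = g" if "g \<in> carrier G" for g
    using that pow_cong[OF that exp e_sum] by (simp add: nat_pow_mult)
  have comm: "g [^] e \<otimes> g [^] e' = g [^] e' \<otimes> g [^] e" if "g \<in> carrier G" for g
    using that by (simp add: nat_pow_mult add.commute)
  have part_a: "g [^] e \<in> frob_set G a" and part_b: "g [^] e' \<in> frob_set G b"
    if "g \<in> carrier G" for g
  proof -
    have "[e * a = 0] (mod a * b)" "[e' * b = 0] (mod a * b)"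
      using e(2) e'(1) by (auto simp: cong_0_iff)
    then show "g [^] e \<in> frob_set G a" "g [^] e' \<in> frob_set G b"
      using that pow_cong[OF that exp] by (simp_all add: frob_set_def nat_pow_pow)
  qed
  show ?thesis
  proof (rule bij_betw_byWitness[where f' = "\<lambda>g. (g [^] e', g [^] e)"])
    have "(x \<otimes> z) [^] e' = z \<and> (x \<otimes> z) [^] e = x"
      if z: "z \<in> frob_set G b" and x: "x \<in> frob_set G a" "x \<in> centralizer z" for z x
    proof -
      have "x \<in> carrier G" "z \<in> carrier G" "x \<otimes> z = z \<otimes> x"
        using z x by (auto simp: frob_set_def centralizer_def)
      then show ?thesis
        using root_a[OF x(1)] root_b[OF z] by (simp add: pow_mult_distrib)
    qed
    then show "\<forall>a \<in> (SIGMA z : frob_set G b. frob_set G a \<inter> centralizer z).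
            (\<lambda>g. (g [^] e', g [^] e)) ((\<lambda>(z, x). x \<otimes> z) a) = a"
      by auto
    show "\<forall>g \<in> carrier G. (\<lambda>(z, x). x \<otimes> z) (g [^] e', g [^] e) = g"
      using split by simp
    show "(\<lambda>(z, x). x \<otimes> z) ` (SIGMA z : frob_set G b. frob_set G a \<inter> centralizer z) \<subseteq> carrier G"
      by (auto simp: frob_set_def)
    show "(\<lambda>g. (g [^] e', g [^] e)) ` carrier G
            \<subseteq> (SIGMA z : frob_set G b. frob_set G a \<inter> centralizer z)"
      using part_a part_b comm by (auto simp: centralizer_def)
  qed
qed

lemma order_eq_sum_card_commuting_roots:
  assumes "finite (carrier G)" "coprime a b" "\<And>g. g \<in> carrier G \<Longrightarrow> g [^] (a * b) = \<one>"
  shows "order G = (\<Sum>z \<in> frob_set G b. card (frob_set G a \<inter> centralizer z))"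
proof -
  have "order G = card (SIGMA z : frob_set G b. frob_set G a \<inter> centralizer z)"
    using bij_betw_same_card[OF bij_betw_coprime_factorization[OF assms(2,3)]]
    by (simp add: order_def)
  also have "\<dots> = (\<Sum>z \<in> frob_set G b. card (frob_set G a \<inter> centralizer z))"
    using assms(1) by (intro card_SigmaI) (auto simp: frob_set_def)
  finally show ?thesis .
qed

lemma subgroup_has_element_of_prime_order:
  assumes "subgroup H G" "finite H" "Factorial_Ring.prime p" "p dvd card H"
  shows "\<exists>x \<in> H. ord x = p"
proof -
  let ?H = "G\<lparr>carrier := H\<rparr>"
  have "group ?H"
    using assms(1) by (rule subgroup.subgroup_is_group) (rule is_group)
  moreover have "order ?H = p ^ 1 * (card H div p)"
    using assms(4) by (simp add: order_def)
  ultimately obtain P where P: "subgroup P ?H" "card P = p"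
    using sylow_thm[OF assms(3)] assms(2) by fastforce
  have "P \<noteq> {\<one>}"
    using P(2) prime_gt_1_nat[OF assms(3)] by auto
  then obtain x where x: "x \<in> P" "x \<noteq> \<one>"
    using subgroup.one_closed[OF P(1)] by auto
  have "subgroup P G"
    using incl_subgroup[OF assms(1) P(1)] .
  then have x_carrier: "x \<in> carrier G"
    using x(1) subgroup.subset by blast
  have "group (G\<lparr>carrier := P\<rparr>)"
    using \<open>subgroup P G\<close> by (rule subgroup.subgroup_is_group) (rule is_group)
  then have "x [^] p = \<one>"
    using group.pow_order_eq_1[of "G\<lparr>carrier := P\<rparr>" x] x(1) P(2)
    by (simp add: order_def flip: nat_pow_consistent)
  then have "ord x dvd p"
    using pow_eq_id[OF x_carrier] by simp
  moreover have "ord x \<noteq> 1"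
    using ord_eq_1[OF x_carrier] x(2) by simp
  ultimately have "ord x = p"
    using assms(3) prime_nat_iff by blast
  then show ?thesis
    using x(1) subgroup.subset[OF P(1)] by auto
qed

lemma prime_not_dvd_card_subgroup_of_roots:
  assumes "subgroup H G" "finite H" "\<And>x. x \<in> H \<Longrightarrow> x [^] m = \<one>"
    and "Factorial_Ring.prime p" "\<not> p dvd m"
  shows "\<not> p dvd card H"
proof
  assume "p dvd card H"
  then obtain x where "x \<in> H" "ord x = p"
    using subgroup_has_element_of_prime_order assms(1,2,4) by blast
  then show False
    using assms(1,3,5) pow_eq_id subgroup.mem_carrier by metis
qed

lemma subgroup_central_roots:
  "subgroup {z \<in> frob_set G m. centralizer z = carrier G} G"
proof (rule subgroupI)
  fix a b
  assume a: "a \<in> {z \<in> frob_set G m. centralizer z = carrier G}"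
    and b: "b \<in> {z \<in> frob_set G m. centralizer z = carrier G}"
  have central: "\<And>g. g \<in> carrier G \<Longrightarrow> g \<otimes> a = a \<otimes> g" "\<And>g. g \<in> carrier G \<Longrightarrow> g \<otimes> b = b \<otimes> g"
    using a b by (auto simp: centralizer_def)
  have ab: "a \<in> carrier G" "b \<in> carrier G" "a [^] m = \<one>" "b [^] m = \<one>"
    using a b by (auto simp: frob_set_def)
  have "inv a [^] m = \<one>"
    using ab by (simp add: nat_pow_inv)
  moreover have "g \<otimes> inv a = inv a \<otimes> g" if "g \<in> carrier G" for g
    using that ab central(1)[of "inv g"] by (metis inv_mult_group inv_closed inv_inv)
  ultimately show "inv a \<in> {z \<in> frob_set G m. centralizer z = carrier G}"
    using ab by (auto simp: frob_set_def centralizer_def)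
  have "(a \<otimes> b) [^] m = \<one>"
    using ab central(1)[of b] by (simp add: pow_mult_distrib)
  moreover have "g \<otimes> (a \<otimes> b) = (a \<otimes> b) \<otimes> g" if "g \<in> carrier G" for g
    using that ab central by (metis m_assoc)
  ultimately show "a \<otimes> b \<in> {z \<in> frob_set G m. centralizer z = carrier G}"
    using ab by (auto simp: frob_set_def centralizer_def)
qed (auto simp: frob_set_def centralizer_def intro!: exI[of _ \<one>])

lemma p_elements_subgroup:
  "H \<subseteq> carrier G \<Longrightarrow> p_elements (G\<lparr>carrier := H\<rparr>) p = p_elements G p \<inter> H"
  by (auto simp: p_elements_def simp flip: nat_pow_consistent)

lemma frob_set_p_part_eq_p_elements:
  assumes "finite (carrier G)" "Factorial_Ring.prime p"
  shows "frob_set G (p ^ multiplicity p (order G)) = p_elements G p"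
proof
  show "frob_set G (p ^ multiplicity p (order G)) \<subseteq> p_elements G p"
    by (auto simp: frob_set_def p_elements_def)
  show "p_elements G p \<subseteq> frob_set G (p ^ multiplicity p (order G))"
  proof
    fix x
    assume "x \<in> p_elements G p"
    then obtain k where x: "x \<in> carrier G" "x [^] (p ^ k) = \<one>"
      by (auto simp: p_elements_def)
    then obtain i where i: "ord x = p ^ i"
      using pow_eq_id divides_primepow_nat[OF assms(2)] by metis
    have "order G \<noteq> 0" "\<not> is_unit p"
      using assms(1) prime_gt_1_nat[OF assms(2)] by (auto simp: order_gt_0_iff_finite[symmetric])
    then have "i \<le> multiplicity p (order G)"
      using ord_dvd_group_order[OF x(1)] i by (simp add: power_dvd_iff_le_multiplicity)
    then have "ord x dvd p ^ multiplicity p (order G)"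
      using i by (simp add: le_imp_power_dvd)
    then show "x \<in> frob_set G (p ^ multiplicity p (order G))"
      using x(1) pow_eq_id by (simp add: frob_set_def)
  qed
qed

lemma p_part_dvd_sum_over_noncentral:
  assumes fin: "finite (carrier G)" and p: "Factorial_Ring.prime p"
    and IH: "\<And>H. subgroup H G \<Longrightarrow> card H < order G \<Longrightarrow>
               p ^ multiplicity p (card H) dvd card (p_elements G p \<inter> H)"
    and S: "S \<subseteq> carrier G" "\<And>g z. g \<in> carrier G \<Longrightarrow> z \<in> S \<Longrightarrow> conjugation g z \<in> S"
    and noncentral: "\<And>z. z \<in> S \<Longrightarrow> centralizer z \<noteq> carrier G"
  shows "p ^ multiplicity p (order G) dvd (\<Sum>z \<in> S. card (p_elements G p \<inter> centralizer z))"
proof -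
  define P where "P = p_elements G p"
  define c where "c z = (if z \<in> S then card (P \<inter> centralizer z) else 0)" for z
  have P_conj: "conjugation g x \<in> P" if "g \<in> carrier G" "x \<in> P" for g x
    using that conjugation_frob_set frob_set_p_part_eq_p_elements[OF fin p] unfolding P_def by metis
  have S_conj_iff: "conjugation g z \<in> S \<longleftrightarrow> z \<in> S" if "g \<in> carrier G" "z \<in> carrier G" for g z
    using that S(2)[of "inv g" "conjugation g z"] S(2)[of g z] by auto
  have "p ^ multiplicity p (order G) dvd (\<Sum>z \<in> carrier G. c z)"
  proof (rule dvd_sum_class_function[OF fin])
    show "c (conjugation g z) = c z" if "g \<in> carrier G" "z \<in> carrier G" for g z
      using that S_conj_iff card_inter_centralizer_conjugation[OF fin _ _ _ P_conj]
      by (simp add: c_def P_def p_elements_def)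
    show "p ^ multiplicity p (order G) dvd card (orbit G conjugation z) * c z"
      if z: "z \<in> carrier G" for z
    proof (cases "z \<in> S")
      case True
      let ?O = "orbit G conjugation z" and ?C = "centralizer z"
      have class_eq: "card ?O * card ?C = order G"
        using card_conjugacy_class_mult_card_centralizer[OF z] .
      have "card ?C < order G"
        using noncentral[OF True] subgroup.subset[OF subgroup_centralizer[OF z]] fin
        by (simp add: order_def psubset_card_mono psubsetI)
      then have "p ^ multiplicity p (card ?C) dvd card (P \<inter> ?C)"
        using IH subgroup_centralizer[OF z] by (simp add: P_def Int_commute)
      moreover have "0 < order G"
        using fin order_gt_0_iff_finite by blast
      then have "card ?O \<noteq> 0" "card ?C \<noteq> 0"
        by (simp_all flip: class_eq)
      then have "p ^ multiplicity p (order G) = p ^ multiplicity p (card ?O) * p ^ multiplicity p (card ?C)"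
        using p by (simp add: class_eq[symmetric] prime_elem_multiplicity_mult_distrib power_add)
      ultimately show ?thesis
        using True by (simp add: c_def mult_dvd_mono multiplicity_dvd)
    qed (simp add: c_def)
  qed
  moreover have "(\<Sum>z \<in> carrier G. c z) = (\<Sum>z \<in> S. card (P \<inter> centralizer z))"
    using fin S(1) by (simp add: c_def sum.If_cases Int_absorb1)
  ultimately show ?thesis
    by (simp add: P_def)
qed

lemma p_part_dvd_card_p_elements_step:
  assumes fin: "finite (carrier G)" and p: "Factorial_Ring.prime p"
    and IH: "\<And>H. subgroup H G \<Longrightarrow> card H < order G \<Longrightarrow>
               p ^ multiplicity p (card H) dvd card (p_elements G p \<inter> H)"
  shows "p ^ multiplicity p (order G) dvd card (p_elements G p)"
proof -
  define s where "s = multiplicity p (order G)"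
  have "order G \<noteq> 0" "\<not> is_unit p"
    using fin prime_gt_1_nat[OF p] by (auto simp: order_gt_0_iff_finite[symmetric])
  then obtain m where order: "order G = p ^ s * m" and "\<not> p dvd m"
    unfolding s_def by (rule multiplicity_decompose')
  then have "coprime (p ^ s) m"
    using p by (simp add: prime_imp_coprime)
  define P where "P = p_elements G p"
  define Y where "Y = frob_set G m"
  define Z where "Z = {z \<in> Y. centralizer z = carrier G}"
  have "P \<subseteq> carrier G" "Z \<subseteq> Y"
    by (auto simp: P_def p_elements_def Z_def)
  have "finite Y"
    using fin by (simp add: Y_def frob_set_def)
  have P_eq: "P = frob_set G (p ^ s)"
    by (simp add: P_def s_def frob_set_p_part_eq_p_elements[OF fin p])
  have exp: "g [^] (p ^ s * m) = \<one>" if "g \<in> carrier G" for g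
    using pow_order_eq_1[OF that] by (simp only: order)
  have "order G = (\<Sum>z \<in> Y. card (P \<inter> centralizer z))"
    unfolding Y_def P_eq by (rule order_eq_sum_card_commuting_roots[OF fin \<open>coprime (p ^ s) m\<close> exp])
  also have "\<dots> = (\<Sum>z \<in> Z. card (P \<inter> centralizer z)) + (\<Sum>z \<in> Y - Z. card (P \<inter> centralizer z))"
    using \<open>finite Y\<close> \<open>Z \<subseteq> Y\<close> by (simp add: sum.subset_diff)
  also have "(\<Sum>z \<in> Z. card (P \<inter> centralizer z)) = card Z * card P"
    using \<open>P \<subseteq> carrier G\<close> by (simp add: Z_def Int_absorb2)
  finally have order_sum: "order G = card Z * card P + (\<Sum>z \<in> Y - Z. card (P \<inter> centralizer z))" .
  have noncentral_dvd: "p ^ s dvd (\<Sum>z \<in> Y - Z. card (P \<inter> centralizer z))"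
    unfolding s_def P_def
  proof (rule p_part_dvd_sum_over_noncentral[OF fin p IH])
    show "Y - Z \<subseteq> carrier G"
      by (auto simp: Y_def frob_set_def)
    show "conjugation g z \<in> Y - Z" if "g \<in> carrier G" "z \<in> Y - Z" for g z
    proof -
      have "z \<in> carrier G"
        using that by (simp add: Y_def frob_set_def)
      then show ?thesis
        using that conjugation_frob_set central_conjugation_iff by (simp add: Y_def Z_def)
    qed
  qed (auto simp: Z_def)
  have "p ^ s dvd card Z * card P + (\<Sum>z \<in> Y - Z. card (P \<inter> centralizer z))"
    using order_sum order by (metis dvd_triv_left)
  then have "p ^ s dvd card Z * card P"
    using noncentral_dvd by (simp add: dvd_add_left_iff)
  moreover have "\<not> p dvd card Z"
  proof (rule prime_not_dvd_card_subgroup_of_roots[OF _ _ _ p \<open>\<not> p dvd m\<close>])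
    show "subgroup Z G"
      unfolding Z_def Y_def by (rule subgroup_central_roots)
    show "finite Z"
      using \<open>finite Y\<close> \<open>Z \<subseteq> Y\<close> finite_subset by blast
  qed (simp add: Z_def Y_def frob_set_def)
  then have "coprime (p ^ s) (card Z)"
    using p by (simp add: prime_imp_coprime)
  ultimately show ?thesis
    by (simp add: s_def P_def coprime_dvd_mult_right_iff)
qed

end

theorem p_part_dvd_card_p_elements:
  assumes "group G" "finite (carrier G)" "Factorial_Ring.prime p"
  shows "p ^ multiplicity p (order G) dvd card (p_elements G p)"
  using assms
proof (induction "order G" arbitrary: G rule: less_induct)
  case less
  interpret group G
    by (rule less.prems(1))
  show ?case
  proof (rule p_part_dvd_card_p_elements_step[OF less.prems(2,3)])
    fix H
    assume H: "subgroup H G" "card H < order G"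
    let ?H = "G\<lparr>carrier := H\<rparr>"
    have "group ?H"
      using H(1) by (rule subgroup.subgroup_is_group) (rule is_group)
    moreover have "finite (carrier ?H)"
      using less.prems(2) subgroup.subset[OF H(1)] finite_subset by auto
    moreover have "order ?H < order G"
      using H(2) by (simp add: order_def)
    ultimately have "p ^ multiplicity p (order ?H) dvd card (p_elements ?H p)"
      using less.hyps[of ?H] less.prems(3) by blast
    then show "p ^ multiplicity p (card H) dvd card (p_elements G p \<inter> H)"
      using p_elements_subgroup[OF subgroup.subset[OF H(1)]] by (simp add: order_def)
  qed
qed

context group
begin

lemma prime_power_dvd_card_frob_set:
  assumes fin: "finite (carrier G)" and p: "Factorial_Ring.prime p" and "p ^ k dvd order G"
  shows "p ^ k dvd card (frob_set G (p ^ k))"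
proof -
  define s where "s = multiplicity p (order G)"
  have "order G \<noteq> 0" "\<not> is_unit p"
    using fin prime_gt_1_nat[OF p] by (auto simp: order_gt_0_iff_finite[symmetric])
  then have "k \<le> s"
    using assms(3) by (simp add: s_def power_dvd_iff_le_multiplicity)
  then show ?thesis
  proof (induction k rule: inc_induct)
    case base
    show ?case
      using p_part_dvd_card_p_elements[OF is_group fin p]
      by (simp add: s_def frob_set_p_part_eq_p_elements[OF fin p])
  next
    case (step n)
    have "p ^ n dvd totient (p ^ Suc n)"
      unfolding totient_prime_power_Suc[OF p] by simp
    then have "p ^ n dvd card {x \<in> carrier G. ord x = p ^ Suc n}"
      using totient_dvd_card_elements_of_ord[OF fin] by (rule dvd_trans)
    have "p ^ n dvd p ^ Suc n"
      by (simp add: le_imp_power_dvd)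
    then have "p ^ n dvd card (frob_set G (p ^ Suc n))"
      using step.IH by (rule dvd_trans)
    with \<open>p ^ n dvd card {x \<in> carrier G. ord x = p ^ Suc n}\<close> show ?case
      using card_frob_set_prime_power_Suc[OF fin p, of n] by (simp add: dvd_add_left_iff)
  qed
qed

section \<open>Frobenius quotients at prime powers\<close>

lemma frob_quot_1: "frob_quot G 1 = 1"
proof -
  have "frob_set G 1 = {\<one>}"
    by (auto simp: frob_set_def)
  then show ?thesis
    by (simp add: frob_quot_def)
qed

lemma frob_quot_prime_power_Suc_cong:
  assumes fin: "finite (carrier G)" and p: "Factorial_Ring.prime p" and "p ^ Suc k dvd order G"
  shows "[frob_quot G (p ^ Suc k) = frob_quot G (p ^ k)] (mod p - 1)"
proof -
  define f where "f = frob_quot G (p ^ k)"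
  define f' where "f' = frob_quot G (p ^ Suc k)"
  have "p ^ k dvd order G"
    using assms(3) by (simp add: dvd_mult_right)
  then have L: "card (frob_set G (p ^ k)) = p ^ k * f"
    using prime_power_dvd_card_frob_set[OF fin p] by (simp add: f_def frob_quot_def)
  have "card (frob_set G (p ^ Suc k)) = p ^ Suc k * f'"
    using prime_power_dvd_card_frob_set[OF fin p assms(3)] unfolding f'_def frob_quot_def by simp
  then have L': "card (frob_set G (p ^ Suc k)) = p ^ k * (p * f')"
    by (simp add: mult.assoc)
  have "p ^ k * (p - 1) dvd card {x \<in> carrier G. ord x = p ^ Suc k}"
    using totient_dvd_card_elements_of_ord[OF fin, of "p ^ Suc k"]
    unfolding totient_prime_power_Suc[OF p] .
  then obtain c where "card {x \<in> carrier G. ord x = p ^ Suc k} = p ^ k * (p - 1) * c"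
    by (rule dvdE)
  then have "p ^ k * (p * f') = p ^ k * (f + (p - 1) * c)"
    using card_frob_set_prime_power_Suc[OF fin p, of k] L L' by (simp add: algebra_simps)
  then have "p * f' = f + (p - 1) * c"
    using prime_gt_0_nat[OF p] by simp
  moreover have "p * f' = f' + (p - 1) * f'"
    using prime_gt_0_nat[OF p] by (simp add: algebra_simps)
  ultimately have "f + c * (p - 1) = f' + f' * (p - 1)"
    by (simp add: mult.commute)
  then show ?thesis
    unfolding f_def [symmetric] f'_def [symmetric] cong_iff_lin_nat by blast
qed

lemma frob_quot_prime_power_cong_1:
  assumes fin: "finite (carrier G)" and p: "Factorial_Ring.prime p" and "p ^ k dvd order G"
  shows "[frob_quot G (p ^ k) = 1] (mod p - 1)"
  using assms(3)
proof (induction k)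
  case 0
  show ?case
    using frob_quot_1 by simp
next
  case (Suc k)
  then have "p ^ k dvd order G"
    by (simp add: dvd_mult_right)
  with Suc show ?case
    using frob_quot_prime_power_Suc_cong[OF fin p] cong_trans by blast
qed

lemma prime_le_frob_quot_prime_power:
  assumes "finite (carrier G)" "Factorial_Ring.prime p" "p ^ k dvd order G"
    and "1 < frob_quot G (p ^ k)"
  shows "p \<le> frob_quot G (p ^ k)"
proof -
  have "p - 1 dvd frob_quot G (p ^ k) - 1"
    using frob_quot_prime_power_cong_1[OF assms(1-3)] by (rule cong_to_1_nat)
  then have "p - 1 \<le> frob_quot G (p ^ k) - 1"
    using assms(4) by (intro dvd_imp_le) auto
  then show ?thesis
    using prime_gt_1_nat[OF assms(2)] by linarith
qed

lemma group_exp_dvd_order: "group_exp G dvd order G"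
  unfolding group_exp_def by (rule Lcm_least) (auto simp: ord_dvd_group_order)

end

theorem corollary1p4:
  fixes G :: "('a, 'b) monoid_scheme" and q f :: nat
  assumes "group G"
    and "finite (carrier G)"
    and "order G > 1"
    and "Factorial_Ring.prime q" and "q dvd order G"
    and "\<And>p. Factorial_Ring.prime p \<Longrightarrow> p dvd order G \<Longrightarrow> q \<le> p"
    and "f > 1"
    and "F_pp G = {1, f}"
  shows "f \<ge> q"
proof -
  interpret group G
    by fact
  have "f \<in> F_pp G"
    using assms(8) by simp
  then obtain p k where p: "Factorial_Ring.prime p" and dvd_exp: "p ^ k dvd group_exp G"
    and f: "f = frob_quot G (p ^ k)"
    unfolding F_pp_def pp_divisors_exp_def by blast
  have dvd_order: "p ^ k dvd order G"
    using dvd_exp group_exp_dvd_order by (rule dvd_trans)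
  have "k \<noteq> 0"
    using f assms(7) frob_quot_1 by (cases k) auto
  then have "p dvd order G"
    using dvd_order dvd_trans[of p "p ^ k"] by simp
  then have "q \<le> p"
    using assms(6) p by blast
  also have "p \<le> f"
    using prime_le_frob_quot_prime_power[OF assms(2) p dvd_order] f assms(7) by simp
  finally show ?thesis .
qed

end
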